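(* Let $f=C_1\wedge\dots\wedge C_k$ be a CNF formula over variables $x_1,\dots,x_n$ ($n\ge1$), and let $\mathbb{K}_+,\mathbb{K}_-$ and $\mathcal{H}=\{\{C_1\},\dots,\{C_k\}\}$ be constructed from $f$ as described in the context. If $H$ is a minimal hypothesis of $(\mathbb{K}_+,\mathbb{K}_-)$ with $H\notin\mathcal{H}$, then $H\subseteq\{x_1,\neg x_1,\dots,x_n,\neg x_n\}$.
   Context: Formal contexts, derivation operators and hypotheses: for a positive context $\mathbb{K}_+=(G_+,M,I_+)$ and negative context $\mathbb{K}_-=(G_-,M,I_-)$, write $B^+=\{g\in G_+:(g,m)\in I_+\ \forall m\in B\}$ for $B\subseteq M$, $A^+=\{m\in M:(g,m)\in I_+\ \forall g\in A\}$ for $A\subseteq G_+$, and $g^-=\{m:(g,m)\in I_-\}$ for $g\in G_-$. A hypothesis is $H\subseteq M$ with $H^{++}=H$ and $H\not\subseteq g^-$ for all $g\in G_-$; a minimal hypothesis is a hypothesis with no proper subset being a hypothesis (if no hypothesis exists, the set of minimal hypotheses is $\{M\}$). Construction: each clause $C_j$ is a disjunction of literals from $L=\{x_1,\neg x_1,\dots,x_n,\neg x_n\}$. Attributes: $M=\{C_1,\dots,C_k\}\cup L$ (clauses and literals are treated as distinct attribute symbols). Positive objects: $G_+=\{g_l: l\in L\}\cup\{g_{C_1},\dots,g_{C_k}\}$. Negative objects: $G_-=\{h_1,\dots,h_n\}$. Incidence $I_+$: $g_l$ has attribute $C_j$ iff the literal $l$ does not occur in $C_j$; $g_l$ has literal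 attribute $l'\in L$ iff $l'\neq l$; $g_{C_j}$ has exactly the attribute $C_j$. Incidence $I_-$: $h_i$ has exactly the attributes $L\setminus\{x_i,\neg x_i\}$. *)

theory Defs
  imports Main
begin

definition obj_der :: "'g set \<Rightarrow> ('g \<times> 'm) set \<Rightarrow> 'm set \<Rightarrow> 'g set" where
  "obj_der G I B = {g \<in> G. \<forall>m\<in>B. (g, m) \<in> I}"

definition attr_der :: "'m set \<Rightarrow> ('g \<times> 'm) set \<Rightarrow> 'g set \<Rightarrow> 'm set" where
  "attr_der M I A = {m \<in> M. \<forall>g\<in>A. (g, m) \<in> I}"

definition obj_intent :: "'m set \<Rightarrow> ('g \<times> 'm) set \<Rightarrow> 'g \<Rightarrow> 'm set" where
  "obj_intent M I g = {m \<in> M. (g, m) \<in> I}"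

definition is_hypothesis ::
  "'g set \<Rightarrow> 'm set \<Rightarrow> ('g \<times> 'm) set \<Rightarrow> 'g set \<Rightarrow> ('g \<times> 'm) set \<Rightarrow> 'm set \<Rightarrow> bool" where
  "is_hypothesis Gp M Ip Gn In H \<longleftrightarrow>
     H \<subseteq> M \<and> attr_der M Ip (obj_der Gp Ip H) = H \<and>
     (\<forall>g\<in>Gn. \<not> H \<subseteq> obj_intent M In g)"

definition minimal_hypotheses ::
  "'g set \<Rightarrow> 'm set \<Rightarrow> ('g \<times> 'm) set \<Rightarrow> 'g set \<Rightarrow> ('g \<times> 'm) set \<Rightarrow> 'm set set" where
  "minimal_hypotheses Gp M Ip Gn In =
     (if \<exists>H. is_hypothesis Gp M Ip Gn In H
      then {H. is_hypothesis Gp M Ip Gn In H \<and>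
               (\<forall>H'. H' \<subset> H \<longrightarrow> \<not> is_hypothesis Gp M Ip Gn In H')}
      else {M})"

datatype lit = Pos nat | Neg nat

datatype attr = ClA nat | LitA lit

datatype obj = GLit lit | GCl nat | HNeg nat

definition lits :: "nat \<Rightarrow> lit set" where
  "lits n = Pos ` {1..n} \<union> Neg ` {1..n}"

text \<open>Clauses are given as a function C from indices to literal sets, C j being the set of literals of clause j, j = 1..k.\<close>

definition attrsM :: "nat \<Rightarrow> nat \<Rightarrow> attr set" where
  "attrsM n k = ClA ` {1..k} \<union> LitA ` lits n"

definition Gpos :: "nat \<Rightarrow> nat \<Rightarrow> obj set" where
  "Gpos n k = GLit ` lits n \<union> GCl ` {1..k}"

definition Ipos :: "nat \<Rightarrow> nat \<Rightarrow> (nat \<Rightarrow> lit set) \<Rightarrow> (obj \<times> attr) set" where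
  "Ipos n k C =
     {(GLit l, ClA j) | l j. l \<in> lits n \<and> j \<in> {1..k} \<and> l \<notin> C j}
   \<union> {(GLit l, LitA l') | l l'. l \<in> lits n \<and> l' \<in> lits n \<and> l' \<noteq> l}
   \<union> {(GCl j, ClA j) | j. j \<in> {1..k}}"

definition Gneg :: "nat \<Rightarrow> obj set" where
  "Gneg n = HNeg ` {1..n}"

definition Ineg :: "nat \<Rightarrow> (obj \<times> attr) set" where
  "Ineg n = {(HNeg i, LitA l) | i l. i \<in> {1..n} \<and> l \<in> lits n - {Pos i, Neg i}}"

definition clause_hyps :: "nat \<Rightarrow> attr set set" where
  "clause_hyps k = {{ClA j} | j. j \<in> {1..k}}"

end

theory Submission
  imports Defs
begin

text \<open>Each singleton clause set is a hypothesis, witnessed by its own object; so a minimal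
  hypothesis containing a clause attribute is that singleton, and all other minimal
  hypotheses consist of literal attributes only.\<close>

lemma minimal_hypothesis_eq_sub_hypothesis:
  assumes "is_hypothesis Gp M Ip Gn In H'"
    and "H \<in> minimal_hypotheses Gp M Ip Gn In"
    and "H' \<subseteq> H"
  shows "H = H'"
proof -
  have "\<not> is_hypothesis Gp M Ip Gn In H'" if "H' \<subset> H"
    using assms(1,2) that unfolding minimal_hypotheses_def by (auto split: if_splits)
  with assms(1,3) show ?thesis by blast
qed

lemma minimal_hypothesis_subset_attributes:
  assumes "H \<in> minimal_hypotheses Gp M Ip Gn In"
  shows "H \<subseteq> M"
  using assms by (auto simp: minimal_hypotheses_def is_hypothesis_def split: if_splits)

lemma clause_singleton_is_hypothesis:
  assumes "j \<in> {1..k}"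
  shows "is_hypothesis (Gpos n k) (attrsM n k) (Ipos n k C) (Gneg n) (Ineg n) {ClA j}"
proof -
  have sub: "{ClA j} \<subseteq> attrsM n k" using assms by (auto simp: attrsM_def)
  have "GCl j \<in> obj_der (Gpos n k) (Ipos n k C) {ClA j}"
    using assms by (auto simp: obj_der_def Gpos_def Ipos_def)
  then have closed:
    "attr_der (attrsM n k) (Ipos n k C) (obj_der (Gpos n k) (Ipos n k C) {ClA j}) = {ClA j}"
    using sub by (auto simp: attr_der_def obj_der_def Ipos_def)
  have "\<forall>g\<in>Gneg n. \<not> {ClA j} \<subseteq> obj_intent (attrsM n k) (Ineg n) g"
    by (auto simp: Gneg_def obj_intent_def Ineg_def)
  with sub closed show ?thesis by (simp add: is_hypothesis_def)
qed

theorem proposition1: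
  fixes n k :: nat and C :: "nat \<Rightarrow> lit set" and H :: "attr set"
  assumes "n \<ge> 1"
    and "\<forall>j\<in>{1..k}. C j \<subseteq> lits n"
    and "H \<in> minimal_hypotheses (Gpos n k) (attrsM n k) (Ipos n k C) (Gneg n) (Ineg n)"
    and "H \<notin> clause_hyps k"
  shows "H \<subseteq> LitA ` lits n"
proof
  fix x assume x: "x \<in> H"
  have "x \<in> attrsM n k" using minimal_hypothesis_subset_attributes[OF assms(3)] x by blast
  then consider j where "x = ClA j" "j \<in> {1..k}" | "x \<in> LitA ` lits n"
    by (auto simp: attrsM_def)
  then show "x \<in> LitA ` lits n"
  proof cases
    case 1
    then have "H = {ClA j}"
      using minimal_hypothesis_eq_sub_hypothesis[OF clause_singleton_is_hypothesis assms(3)] x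
      by blast
    with 1 assms(4) show ?thesis by (auto simp: clause_hyps_def)
  qed
qed

end
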